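(* Let $p$ be a prime, $r \geq 1$ an integer, and let $D \in \mathbb{Z}_{p^r}^*$ be such that $D \bmod p$ is a quadratic non-residue in $\mathbb{Z}_p$. Then $(\mathcal{H}_{D,\mathbb{Z}_{p^r}}, \otimes)$ is a cyclic group of order $p^{r-1}(p+1)$; i.e., the Pell equation $x^2 - D y^2 = 1$ has exactly $p^{r-1}(p+1)$ solutions $(x,y) \in \mathbb{Z}_{p^r} \times \mathbb{Z}_{p^r}$.
   Context: For a commutative ring $R$ and $D \in R$, let $\mathcal{H}_{D,R} = \{(x,y) \in R \times R : x^2 - D y^2 = 1\}$, equipped with the product $(x,y) \otimes (w,z) = (xw + yzD,\ yw + xz)$. This is a commutative group with identity $(1,0)$ and inverse of $(x,y)$ equal to $(x,-y)$. Here $\mathbb{Z}_{m}$ denotes the ring of integers modulo $m$. *)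

theory Defs
  imports "HOL-Number_Theory.Number_Theory" "HOL-Algebra.Elementary_Groups"
begin

definition pell_group :: "('a, 'b) ring_scheme \<Rightarrow> 'a \<Rightarrow> ('a \<times> 'a) monoid" where
  "pell_group R D =
    \<lparr>carrier = {(x, y). x \<in> carrier R \<and> y \<in> carrier R \<and>
                   (x \<otimes>\<^bsub>R\<^esub> x) \<ominus>\<^bsub>R\<^esub> (D \<otimes>\<^bsub>R\<^esub> (y \<otimes>\<^bsub>R\<^esub> y)) = \<one>\<^bsub>R\<^esub>},
     mult = (\<lambda>(x, y) (w, z). ((x \<otimes>\<^bsub>R\<^esub> w) \<oplus>\<^bsub>R\<^esub> ((y \<otimes>\<^bsub>R\<^esub> z) \<otimes>\<^bsub>R\<^esub> D),
                             (y \<otimes>\<^bsub>R\<^esub> w) \<oplus>\<^bsub>R\<^esub> (x \<otimes>\<^bsub>R\<^esub> z))),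
     one = (\<one>\<^bsub>R\<^esub>, \<zero>\<^bsub>R\<^esub>)\<rparr>"

end

theory Submission
  imports Defs
begin

text \<open>
  Since \<open>D\<close> is a non-residue modulo \<open>p\<close>, \<open>p\<close> divides \<open>x\<^sup>2 - D y\<^sup>2\<close> only if it divides
  both \<open>x\<close> and \<open>y\<close>; in particular \<open>p\<close> is odd and prime to \<open>D\<close>.  Modulo \<open>M = p\<^sup>r\<close> the
  lines \<open>D y = t (x - 1)\<close> through \<open>(1, 0)\<close> give a bijection
  \<open>t \<mapsto> ((t\<^sup>2 + D)/(t\<^sup>2 - D), 2t/(t\<^sup>2 - D))\<close> from \<open>\<int>\<^sub>M\<close> onto the points with
  \<open>p\<close> not dividing \<open>x - 1\<close>.  The reflection \<open>x \<mapsto> -x\<close> maps the remaining points, those with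
  \<open>x \<equiv> 1 (mod p)\<close>, onto the points with \<open>x \<equiv> -1 (mod p)\<close>, which are the images of the
  \<open>p\<^bsup>r-1\<^esup>\<close> multiples of \<open>p\<close>.  Hence the group has \<open>p\<^sup>r + p\<^bsup>r-1\<^esup>\<close> elements.

  It is cyclic because it contains an element of order \<open>p\<^bsup>r-1\<^esup>\<close> and one of order \<open>p + 1\<close>.
  For the first, raising a point \<open>(x, y)\<close> with \<open>x \<equiv> 1 (mod p)\<close> to the \<open>p\<close>-th power raises the
  exact power of \<open>p\<close> dividing \<open>y\<close> by one.  For the second, the points modulo \<open>p\<close> are the
  norm-one elements of the field \<open>\<int>\<^sub>p[\<surd>D]\<close>, whose multiplicative group is cyclic of order
  \<open>(p - 1)(p + 1)\<close>; an element of order \<open>p + 1\<close> there lifts through the parametrization.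
\<close>

lemma (in comm_group) ord_dvd_if_mult_pow_eq_one:
  assumes x: "x \<in> carrier G" and y: "y \<in> carrier G" and cop: "coprime (ord x) (ord y)"
    and xy: "(x \<otimes> y) [^] n = \<one>"
  shows "ord x dvd n"
proof -
  have "x [^] (n * ord y) \<otimes> y [^] (n * ord y) = \<one>"
    using xy x y by (simp add: nat_pow_pow flip: pow_mult_distrib[OF m_comm] nat_pow_pow)
  moreover have "y [^] (n * ord y) = \<one>"
    using y by (simp add: pow_eq_id)
  ultimately have "ord x dvd n * ord y"
    using x by (simp add: pow_eq_id)
  with cop show ?thesis
    by (simp add: coprime_dvd_mult_left_iff)
qed

lemma (in comm_group) ord_mult_coprime:
  assumes x: "x \<in> carrier G" and y: "y \<in> carrier G" and cop: "coprime (ord x) (ord y)"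
  shows "ord (x \<otimes> y) = ord x * ord y"
proof (rule dvd_antisym)
  show "ord (x \<otimes> y) dvd ord x * ord y"
    using x y by (rule abelian_ord_mul_divides)
  have "ord x dvd ord (x \<otimes> y)" "ord y dvd ord (x \<otimes> y)"
    using ord_dvd_if_mult_pow_eq_one[OF x y cop] ord_dvd_if_mult_pow_eq_one[OF y x, of "ord (x \<otimes> y)"]
      x y cop by (simp_all add: m_comm coprime_commute)
  with cop show "ord x * ord y dvd ord (x \<otimes> y)"
    by (simp add: divides_mult)
qed

lemma (in group) exists_ord_eq_if_dvd_ord:
  assumes fin: "finite (carrier G)" and x: "x \<in> carrier G" and d: "d dvd ord x"
  shows "\<exists>y \<in> carrier G. ord y = d"
proof -
  obtain k where k: "ord x = d * k"
    using d by blast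
  then have "k \<noteq> 0"
    using ord_ge_1[OF fin x] by (intro notI) simp
  then have "ord (x [^] k) = d"
    using ord_pow[OF x, of k] k by simp
  with x show ?thesis
    by blast
qed

lemma (in group) cyclic_group_if_ord_eq_card:
  assumes fin: "finite (carrier G)" and g: "g \<in> carrier G" and ord_g: "ord g = card (carrier G)"
  shows "cyclic_group G"
proof -
  have "card (carrier (subgroup_generated G {g})) = card (carrier G)"
    using cyclic_order_is_ord[OF g] ord_g by (simp add: order_def)
  then have "carrier (subgroup_generated G {g}) = carrier G"
    using card_subset_eq[OF fin carrier_subgroup_generated_subset] by blast
  then have "subgroup_generated G {g} = G"
    by (simp add: subgroup_generated_def carrier_subgroup_generated)
  with g show ?thesis
    unfolding cyclic_group_def by blast
qed

lemma (in field) exists_ord_eq_order_mult_of: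
  assumes fin: "finite (carrier R)"
  shows "\<exists>g \<in> carrier (mult_of R). group.ord (mult_of R) g = order (mult_of R)"
proof -
  interpret M: group "mult_of R"
    by (rule field_mult_group)
  obtain g where g: "g \<in> carrier (mult_of R)"
    and gen: "carrier (mult_of R) = {g [^] i | i :: nat. i \<in> UNIV}"
    using finite_field_mult_group_has_gen[OF fin] by blast
  have "carrier (mult_of R) = {g [^]\<^bsub>mult_of R\<^esub> i | i. i \<in> {0..M.ord g - 1}}"
    using M.ord_elems[OF _ g] fin gen by (simp add: nat_pow_mult_of)
  then have "carrier (mult_of R) = (\<lambda>i. g [^]\<^bsub>mult_of R\<^esub> i) ` {0..M.ord g - 1}"
    by blast
  then have "card (carrier (mult_of R)) \<le> card {0..M.ord g - 1}"
    by (metis card_image_le finite_atLeastAtMost)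
  moreover have "M.ord g \<ge> 1"
    using M.ord_ge_1[OF _ g] fin by simp
  ultimately have "order (mult_of R) \<le> M.ord g"
    by (simp add: order_def)
  with M.ord_le_group_order[OF _ g] fin g show ?thesis
    by (metis dual_order.antisym finite_mult_of)
qed

section \<open>The Pell group modulo \<open>M\<close> on integer pairs\<close>

definition pell_mult :: "int \<Rightarrow> int \<times> int \<Rightarrow> int \<times> int \<Rightarrow> int \<times> int" where
  "pell_mult D a b = (fst a * fst b + snd a * snd b * D, snd a * fst b + fst a * snd b)"

definition pell_norm :: "int \<Rightarrow> int \<times> int \<Rightarrow> int" where
  "pell_norm D a = fst a * fst a - D * (snd a * snd a)"

primrec pell_pow :: "int \<Rightarrow> int \<times> int \<Rightarrow> nat \<Rightarrow> int \<times> int" where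
  "pell_pow D a 0 = (1, 0)"
| "pell_pow D a (Suc n) = pell_mult D (pell_pow D a n) a"

definition mod_pair :: "int \<Rightarrow> int \<times> int \<Rightarrow> int \<times> int" where
  "mod_pair M a = (fst a mod M, snd a mod M)"

lemma pell_mult_assoc: "pell_mult D (pell_mult D a b) c = pell_mult D a (pell_mult D b c)"
  by (simp add: pell_mult_def algebra_simps)

lemma pell_mult_commute: "pell_mult D a b = pell_mult D b a"
  by (simp add: pell_mult_def algebra_simps)

lemma pell_mult_one_left [simp]: "pell_mult D (1, 0) a = a"
  by (simp add: pell_mult_def)

lemma pell_norm_mult: "pell_norm D (pell_mult D a b) = pell_norm D a * pell_norm D b"
  by (simp add: pell_norm_def pell_mult_def algebra_simps)

lemma pell_norm_pow: "pell_norm D (pell_pow D a n) = pell_norm D a ^ n"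
  by (induction n) (simp_all add: pell_norm_mult, simp add: pell_norm_def)

lemma mod_pair_mult_left: "mod_pair M (pell_mult D (mod_pair M a) b) = mod_pair M (pell_mult D a b)"
  unfolding mod_pair_def pell_mult_def by (auto simp flip: cong_def intro!: cong_add cong_mult)

lemma mod_pair_mult_right: "mod_pair M (pell_mult D a (mod_pair M b)) = mod_pair M (pell_mult D a b)"
  unfolding mod_pair_def pell_mult_def by (auto simp flip: cong_def intro!: cong_add cong_mult)

lemma mod_pair_pow: "mod_pair M (pell_pow D (mod_pair M a) n) = mod_pair M (pell_pow D a n)"
proof (induction n)
  case (Suc n)
  have "mod_pair M (pell_pow D (mod_pair M a) (Suc n))
      = mod_pair M (pell_mult D (mod_pair M (pell_pow D (mod_pair M a) n)) (mod_pair M a))"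
    by (simp add: mod_pair_mult_left)
  also have "\<dots> = mod_pair M (pell_mult D (pell_pow D a n) a)"
    by (simp only: Suc mod_pair_mult_left mod_pair_mult_right)
  finally show ?case by simp
qed simp

lemma cong_pell_norm_mod_pair: "[pell_norm D (mod_pair M a) = pell_norm D a] (mod M)"
  unfolding pell_norm_def mod_pair_def by (auto simp flip: cong_def intro!: cong_diff cong_mult)

lemma mod_pair_mod_pair: "M' dvd M \<Longrightarrow> mod_pair M' (mod_pair M a) = mod_pair M' a"
  by (simp add: mod_pair_def mod_mod_cancel)

lemma mod_pair_eq_self: "fst a \<in> {0..<M} \<Longrightarrow> snd a \<in> {0..<M} \<Longrightarrow> mod_pair M a = a"
  by (simp add: mod_pair_def prod_eq_iff)

lemma carrier_pell_group_residue_ring: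
  assumes "M > 1"
  shows "carrier (pell_group (residue_ring M) D) =
    {a. fst a \<in> {0..<M} \<and> snd a \<in> {0..<M} \<and> [pell_norm D a = 1] (mod M)}"
proof -
  interpret residues M "residue_ring M" by unfold_locales (use assms in auto)
  have "(x * x) mod M \<oplus>\<^bsub>residue_ring M\<^esub> \<ominus>\<^bsub>residue_ring M\<^esub> ((D * ((y * y) mod M)) mod M)
      = pell_norm D (x, y) mod M" for x y
    by (simp add: res_neg_eq res_add_eq pell_norm_def mod_simps)
  then show ?thesis
    using assms unfolding pell_group_def a_minus_def
    by (auto simp: res_carrier_eq res_mult_eq res_one_eq cong_def)
qed

lemma mod_pair_in_carrier:
  assumes "M > 1" "[pell_norm D a = 1] (mod M)"
  shows "mod_pair M a \<in> carrier (pell_group (residue_ring M) D)"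
  using assms cong_trans[OF cong_pell_norm_mod_pair]
  by (simp add: carrier_pell_group_residue_ring mod_pair_def)

lemma negate_fst_in_carrier:
  fixes M :: int
  assumes M: "M > 1" and a: "a \<in> carrier (pell_group (residue_ring M) D)"
  shows "((- fst a) mod M, snd a) \<in> carrier (pell_group (residue_ring M) D)"
proof -
  have "[(- fst a) mod M * ((- fst a) mod M) = (- fst a) * (- fst a)] (mod M)"
    by (intro cong_mult) simp_all
  then have "[pell_norm D ((- fst a) mod M, snd a) = pell_norm D a] (mod M)"
    unfolding pell_norm_def by (intro cong_diff) simp_all
  with a M show ?thesis
    by (auto simp: carrier_pell_group_residue_ring elim: cong_trans)
qed

lemma mult_pell_group_residue_ring:
  "a \<otimes>\<^bsub>pell_group (residue_ring M) D\<^esub> b = mod_pair M (pell_mult D a b)"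
  by (cases a; cases b) (simp add: pell_group_def residue_ring_def mod_pair_def pell_mult_def mod_simps)

lemma one_pell_group_residue_ring: "\<one>\<^bsub>pell_group (residue_ring M) D\<^esub> = (1, 0)"
  by (simp add: pell_group_def residue_ring_def)

lemma comm_group_pell_group_residue_ring:
  assumes "M > 1"
  shows "comm_group (pell_group (residue_ring M) D)"
proof -
  let ?G = "pell_group (residue_ring M) D"
  note carrier = carrier_pell_group_residue_ring[OF assms, of D]
  note mult = mult_pell_group_residue_ring
  note closed = mod_pair_in_carrier[OF assms]
  show ?thesis
  proof (rule comm_groupI)
    fix a b assume "a \<in> carrier ?G" "b \<in> carrier ?G"
    then have "[pell_norm D (pell_mult D a b) = 1 * 1] (mod M)"
      unfolding pell_norm_mult by (intro cong_mult) (simp_all add: carrier)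
    then show "a \<otimes>\<^bsub>?G\<^esub> b \<in> carrier ?G"
      by (simp add: mult closed)
  next
    fix a b c assume "a \<in> carrier ?G" "b \<in> carrier ?G" "c \<in> carrier ?G"
    show "a \<otimes>\<^bsub>?G\<^esub> b \<otimes>\<^bsub>?G\<^esub> c = a \<otimes>\<^bsub>?G\<^esub> (b \<otimes>\<^bsub>?G\<^esub> c)"
      by (simp add: mult mod_pair_mult_left mod_pair_mult_right pell_mult_assoc)
  next
    fix a b show "a \<otimes>\<^bsub>?G\<^esub> b = b \<otimes>\<^bsub>?G\<^esub> a"
      by (simp add: mult pell_mult_commute)
  next
    show "\<one>\<^bsub>?G\<^esub> \<in> carrier ?G"
      using assms by (simp add: one_pell_group_residue_ring carrier pell_norm_def)
  next
    fix a assume "a \<in> carrier ?G"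
    then show "\<one>\<^bsub>?G\<^esub> \<otimes>\<^bsub>?G\<^esub> a = a"
      by (simp add: carrier mult one_pell_group_residue_ring mod_pair_eq_self)
  next
    fix a assume a: "a \<in> carrier ?G"
    have conj: "mod_pair M (fst a, - snd a) \<in> carrier ?G"
      using a by (intro closed) (simp add: carrier pell_norm_def)
    have "pell_mult D (fst a, - snd a) a = (pell_norm D a, 0)"
      by (simp add: pell_mult_def pell_norm_def algebra_simps)
    then have "mod_pair M (fst a, - snd a) \<otimes>\<^bsub>?G\<^esub> a = \<one>\<^bsub>?G\<^esub>"
      using a assms by (simp add: mult mod_pair_mult_left one_pell_group_residue_ring carrier)
        (simp add: mod_pair_def cong_def)
    with conj show "\<exists>b \<in> carrier ?G. b \<otimes>\<^bsub>?G\<^esub> a = \<one>\<^bsub>?G\<^esub>" by blast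
  qed
qed

lemma pow_pell_group_residue_ring:
  assumes "M > 1" "a \<in> carrier (pell_group (residue_ring M) D)"
  shows "a [^]\<^bsub>pell_group (residue_ring M) D\<^esub> n = mod_pair M (pell_pow D a n)"
proof (induction n)
  case 0
  show ?case using assms(1) by (simp add: one_pell_group_residue_ring mod_pair_def)
next
  case (Suc n)
  then show ?case by (simp add: mult_pell_group_residue_ring mod_pair_mult_left)
qed

lemma mod_pair_pow_pell_group:
  fixes M M' :: int and n :: nat
  assumes "M' dvd M" "M' > 1" "M > 1" and a: "a \<in> carrier (pell_group (residue_ring M) D)"
  shows "mod_pair M' (a [^]\<^bsub>pell_group (residue_ring M) D\<^esub> n)
    = mod_pair M' a [^]\<^bsub>pell_group (residue_ring M') D\<^esub> n"
proof -
  have "[pell_norm D a = 1] (mod M')"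
    using a assms(1,3) by (auto simp: carrier_pell_group_residue_ring intro: cong_dvd_modulus)
  then have "mod_pair M' a \<in> carrier (pell_group (residue_ring M') D)"
    by (rule mod_pair_in_carrier[OF assms(2)])
  then show ?thesis
    using pow_pell_group_residue_ring[OF assms(3) a] pow_pell_group_residue_ring[OF assms(2)]
    by (simp add: mod_pair_mod_pair[OF assms(1)] mod_pair_pow)
qed

section \<open>Rational parametrization\<close>

text \<open>The second intersection of the conic with the line \<open>D y = t (x - 1)\<close> through \<open>(1, 0)\<close>.\<close>
definition pell_param :: "int \<Rightarrow> int \<Rightarrow> int \<Rightarrow> int \<times> int" where
  "pell_param D M t = mod_pair M
     ((t * t + D) * modular_inverse M (t * t - D), 2 * t * modular_inverse M (t * t - D))"

context
  fixes D M t :: int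
  assumes coprime: "coprime (t * t - D) M"
begin

private abbreviation (input) "i \<equiv> modular_inverse M (t * t - D)"

private lemma inverse_cong: "[(t * t - D) * i = 1] (mod M)"
  using coprime by (rule cong_modular_inverse1)

lemma pell_param_in_carrier:
  assumes "M > 1"
  shows "pell_param D M t \<in> carrier (pell_group (residue_ring M) D)"
proof -
  have "pell_norm D ((t * t + D) * i, 2 * t * i) = ((t * t - D) * i) ^ 2"
    by (simp add: pell_norm_def power2_eq_square algebra_simps)
  also have "[((t * t - D) * i) ^ 2 = 1 ^ 2] (mod M)"
    using inverse_cong by (rule cong_pow)
  finally show ?thesis
    unfolding pell_param_def using assms by (intro mod_pair_in_carrier) simp_all
qed

lemma pell_param_fst: "[fst (pell_param D M t) = (t * t + D) * i] (mod M)"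
  by (simp add: pell_param_def mod_pair_def)

lemma pell_param_snd: "[snd (pell_param D M t) = 2 * t * i] (mod M)"
  by (simp add: pell_param_def mod_pair_def)

lemma pell_param_fst_minus_one: "[fst (pell_param D M t) - 1 = 2 * D * i] (mod M)"
proof -
  have "[fst (pell_param D M t) - 1 = (t * t + D) * i - (t * t - D) * i] (mod M)"
    using pell_param_fst inverse_cong by (intro cong_diff) (simp_all add: cong_sym)
  then show ?thesis by (simp add: algebra_simps)
qed

lemma pell_param_fst_plus_one: "[fst (pell_param D M t) + 1 = 2 * t * t * i] (mod M)"
proof -
  have "[fst (pell_param D M t) + 1 = (t * t + D) * i + (t * t - D) * i] (mod M)"
    using pell_param_fst inverse_cong by (intro cong_add) (simp_all add: cong_sym)
  then show ?thesis by (simp add: algebra_simps)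
qed

lemma pell_param_line: "[D * snd (pell_param D M t) = t * (fst (pell_param D M t) - 1)] (mod M)"
proof -
  have "[D * snd (pell_param D M t) = D * (2 * t * i)] (mod M)"
    using pell_param_snd by (rule cong_scalar_left)
  also have "D * (2 * t * i) = t * (2 * D * i)"
    by simp
  also have "[t * (2 * D * i) = t * (fst (pell_param D M t) - 1)] (mod M)"
    using pell_param_fst_minus_one by (intro cong_scalar_left) (rule cong_sym)
  finally show ?thesis .
qed

end

lemma pell_line_cong:
  fixes x y t D M :: int
  assumes norm: "[x * x - D * (y * y) = 1] (mod M)" and coprime_x: "coprime (x - 1) M"
    and line: "[t * (x - 1) = D * y] (mod M)"
  shows "[(x - 1) * (t * t - D) = 2 * D] (mod M)"
proof -
  have "[(x - 1) * (t * t * (x - 1)) = (x - 1) * (D * (x + 1))] (mod M)"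
  proof -
    have "(x - 1) * (t * t * (x - 1)) = (t * (x - 1)) ^ 2"
      by (simp add: power2_eq_square ac_simps)
    also have "[\<dots> = (D * y) ^ 2] (mod M)"
      using line by (rule cong_pow)
    also have "(D * y) ^ 2 = D * (1 + D * (y * y)) - D"
      by (simp add: power2_eq_square algebra_simps)
    also have "[\<dots> = D * (x * x) - D] (mod M)"
      using cong_add[OF norm cong_refl[of "D * (y * y)"]]
      by (intro cong_diff cong_scalar_left) (simp_all add: cong_sym_eq add.commute)
    also have "D * (x * x) - D = (x - 1) * (D * (x + 1))"
      by (simp add: algebra_simps)
    finally show ?thesis .
  qed
  then have tt: "[t * t * (x - 1) = D * (x + 1)] (mod M)"
    using coprime_x by (simp add: cong_mult_lcancel)
  have "(x - 1) * (t * t - D) = t * t * (x - 1) - D * (x - 1)"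
    "2 * D = D * (x + 1) - D * (x - 1)"
    by (simp_all add: algebra_simps)
  then show ?thesis
    using cong_diff[OF tt cong_refl[of "D * (x - 1)"]] by (simp only:)
qed

lemma pell_param_eq_if_line:
  fixes x y t D M :: int
  assumes coprime_2D: "coprime (2 * D) M" and coprime_t: "coprime (t * t - D) M"
    and range: "x \<in> {0..<M}" "y \<in> {0..<M}"
    and line: "[t * (x - 1) = D * y] (mod M)" and key: "[(x - 1) * (t * t - D) = 2 * D] (mod M)"
  shows "pell_param D M t = (x, y)"
proof -
  let ?i = "modular_inverse M (t * t - D)"
  have inv: "[(t * t - D) * ?i = 1] (mod M)"
    using coprime_t by (rule cong_modular_inverse1)
  have x_minus_one: "[x - 1 = 2 * D * ?i] (mod M)"
  proof -
    have "[(x - 1) * 1 = (x - 1) * ((t * t - D) * ?i)] (mod M)"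
      using inv by (intro cong_scalar_left) (rule cong_sym)
    also have "(x - 1) * ((t * t - D) * ?i) = ((x - 1) * (t * t - D)) * ?i"
      by (simp add: ac_simps)
    also have "[\<dots> = 2 * D * ?i] (mod M)"
      using key by (rule cong_scalar_right)
    finally show ?thesis by simp
  qed
  have "[x = (t * t + D) * ?i] (mod M)"
  proof -
    have "[x - 1 + 1 = 2 * D * ?i + (t * t - D) * ?i] (mod M)"
      using x_minus_one inv by (intro cong_add) (simp_all add: cong_sym_eq)
    then show ?thesis by (simp add: algebra_simps)
  qed
  moreover have "[y = 2 * t * ?i] (mod M)"
  proof -
    have "[D * y = t * (x - 1)] (mod M)"
      using line by (rule cong_sym)
    also have "[t * (x - 1) = t * (2 * D * ?i)] (mod M)"
      using x_minus_one by (rule cong_scalar_left)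
    finally have "[D * y = D * (2 * t * ?i)] (mod M)"
      by (simp add: ac_simps)
    then show ?thesis
      using coprime_2D by (simp add: cong_mult_lcancel)
  qed
  ultimately show ?thesis
    using range by (simp add: pell_param_def mod_pair_def cong_def)
qed

lemma pell_param_surj:
  assumes M: "M > 1" and coprime_2D: "coprime (2 * D) M"
    and a: "a \<in> carrier (pell_group (residue_ring M) D)" and coprime_x: "coprime (fst a - 1) M"
  obtains t where "t \<in> {0..<M}" "coprime (t * t - D) M" "pell_param D M t = a"
proof -
  obtain x y where a_eq: "a = (x, y)" by (cases a)
  have range: "x \<in> {0..<M}" "y \<in> {0..<M}" and norm: "[x * x - D * (y * y) = 1] (mod M)"
    using a M by (simp_all add: carrier_pell_group_residue_ring a_eq pell_norm_def)
  define t where "t = D * y * modular_inverse M (x - 1) mod M"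
  have line: "[t * (x - 1) = D * y] (mod M)"
  proof -
    have "[t * (x - 1) = D * y * ((x - 1) * modular_inverse M (x - 1))] (mod M)"
      by (simp add: t_def cong_def mod_simps ac_simps)
    also have "[D * y * ((x - 1) * modular_inverse M (x - 1)) = D * y * 1] (mod M)"
      using coprime_x a_eq by (intro cong_scalar_left cong_modular_inverse1) simp
    finally show ?thesis by simp
  qed
  have key: "[(x - 1) * (t * t - D) = 2 * D] (mod M)"
    using norm coprime_x line a_eq by (intro pell_line_cong) simp_all
  then have coprime_t: "coprime (t * t - D) M"
    using cong_imp_coprime[OF cong_sym[OF key]] coprime_2D by simp
  have "pell_param D M t = a"
    using pell_param_eq_if_line[OF coprime_2D coprime_t range line key] a_eq by simp
  moreover have "t \<in> {0..<M}"
    using M by (simp add: t_def)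
  ultimately show ?thesis
    using coprime_t that by blast
qed

lemma mod_pair_pell_param:
  fixes M M' t D :: int
  assumes "M' dvd M" and coprime: "coprime (t * t - D) M"
  shows "mod_pair M' (pell_param D M t) = pell_param D M' t"
proof -
  let ?u = "t * t - D"
  have coprime': "coprime ?u M'"
    using coprime assms(1) by (metis coprime_mult_right_iff dvdE)
  have "[?u * modular_inverse M ?u = 1] (mod M')"
    using cong_modular_inverse1[OF coprime] assms(1) by (rule cong_dvd_modulus)
  moreover have "[?u * modular_inverse M' ?u = 1] (mod M')"
    using coprime' by (rule cong_modular_inverse1)
  ultimately have "[modular_inverse M ?u = modular_inverse M' ?u] (mod M')"
    using coprime' by (metis cong_mult_lcancel cong_sym cong_trans)
  then show ?thesis
    using assms(1) unfolding pell_param_def mod_pair_mod_pair[OF assms(1)]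
    by (simp add: mod_pair_def cong_def[symmetric] cong_scalar_left)
qed

lemma card_multiples_int:
  fixes n m :: int
  assumes "n > 0"
  shows "card {t \<in> {0..<n * m}. n dvd t} = nat m"
proof -
  have "{t \<in> {0..<n * m}. n dvd t} = (\<lambda>j. n * j) ` {0..<m}"
    using assms by (auto simp: zero_le_mult_iff elim!: dvdE)
  moreover have "inj_on (\<lambda>j. n * j) {0..<m}"
    using assms by (simp add: inj_on_def)
  ultimately show ?thesis
    by (simp add: card_image)
qed

lemma fermat_theorem_int:
  fixes a :: int
  assumes "prime p" "\<not> int p dvd a"
  shows "[a ^ (p - 1) = 1] (mod int p)"
proof -
  define b where "b = nat (a mod int p)"
  have b: "int b = a mod int p"
    using prime_gt_0_nat[OF assms(1)] by (simp add: b_def)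
  have "\<not> p dvd b"
  proof
    assume "p dvd b"
    then have "int p dvd a mod int p"
      by (simp flip: b)
    with assms(2) show False
      by (simp add: dvd_mod_iff)
  qed
  with assms(1) have "[b ^ (p - 1) = 1] (mod p)"
    by (rule fermat_theorem)
  then have "[int b ^ (p - 1) = 1] (mod int p)"
    using cong_int_iff[of "b ^ (p - 1)" 1 p] by simp
  moreover have "[a ^ (p - 1) = int b ^ (p - 1)] (mod int p)"
    using b by (intro cong_pow) (simp add: cong_def)
  ultimately show ?thesis
    by (simp add: cong_trans)
qed

locale pell_nonresidue =
  fixes p :: nat and D :: int
  assumes prime_p: "prime p" and nonresidue: "\<not> QuadRes (int p) D"
begin

abbreviation H :: "nat \<Rightarrow> (int \<times> int) monoid" where
  "H k \<equiv> pell_group (residue_ring (int p ^ k)) D"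

lemma prime_int_p: "prime (int p)"
  using prime_p by simp

lemma dvd_pell_norm_imp_dvd:
  assumes "int p dvd pell_norm D a"
  shows "int p dvd fst a \<and> int p dvd snd a"
proof (cases "int p dvd snd a")
  case True
  then have "int p dvd pell_norm D a + D * (snd a * snd a)"
    using assms by simp
  then have "int p dvd fst a * fst a"
    by (simp add: pell_norm_def)
  with True show ?thesis
    using prime_int_p prime_dvd_mult_iff by blast
next
  case False
  then have "coprime (snd a) (int p)"
    using prime_int_p prime_imp_coprime coprime_commute by blast
  then obtain w where w: "[snd a * w = 1] (mod int p)"
    using cong_solve_coprime_int by blast
  have "[fst a * fst a = D * (snd a * snd a)] (mod int p)"
    using assms by (simp add: pell_norm_def cong_iff_dvd_diff)
  then have "[fst a * fst a * (w * w) = D * (snd a * snd a) * (w * w)] (mod int p)"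
    by (rule cong_scalar_right)
  then have "[(fst a * w) ^ 2 = D * (snd a * w) ^ 2] (mod int p)"
    by (simp add: power2_eq_square ac_simps)
  also have "[D * (snd a * w) ^ 2 = D * 1 ^ 2] (mod int p)"
    using w by (intro cong_scalar_left cong_pow)
  finally have "[(fst a * w) ^ 2 = D] (mod int p)"
    by simp
  then show ?thesis
    using nonresidue unfolding QuadRes_def by blast
qed

lemma not_dvd_D: "\<not> int p dvd D"
  using dvd_pell_norm_imp_dvd[of "(0, 1)"] prime_int_p by (auto simp: pell_norm_def)

lemma p_ge_3: "p \<ge> 3"
proof -
  have "p \<noteq> 2"
  proof
    assume p: "p = 2"
    then have "[1 ^ 2 = D] (mod int p)"
      using not_dvd_D by (simp add: cong_def odd_iff_mod_2_eq_one)
    then show False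
      using nonresidue unfolding QuadRes_def by blast
  qed
  then show ?thesis
    using prime_ge_2_nat[OF prime_p] by simp
qed

lemma p_power_gt_1: "k \<ge> 1 \<Longrightarrow> int p ^ k > 1"
  using p_ge_3 by simp

lemma coprime_p_power_iff:
  assumes "k \<ge> 1"
  shows "coprime a (int p ^ k) \<longleftrightarrow> \<not> int p dvd a"
proof
  assume "coprime a (int p ^ k)"
  moreover have "int p dvd int p ^ k"
    using assms by (simp add: dvd_power)
  ultimately show "\<not> int p dvd a"
    using prime_int_p by (metis coprime_common_divisor not_prime_unit)
qed (rule prime_imp_power_coprime[OF prime_int_p])

lemma cong_p_if_cong_p_power: "k \<ge> 1 \<Longrightarrow> [a = b] (mod int p ^ k) \<Longrightarrow> [a = b] (mod int p)"
  by (erule cong_dvd_modulus) (simp add: dvd_power)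

lemma not_dvd_2: "\<not> int p dvd 2"
  using p_ge_3 by (auto dest: zdvd_imp_le)

lemma not_dvd_plus_one_if_dvd_minus_one:
  assumes "int p dvd x - 1"
  shows "\<not> int p dvd x + 1"
  using not_dvd_2 dvd_diff[of "int p" "x + 1" "x - 1"] assms by auto

lemma coprime_2D: "coprime (2 * D) (int p ^ k)"
  using not_dvd_2 not_dvd_D prime_int_p
  by (intro prime_imp_power_coprime) (simp_all add: prime_dvd_mult_iff)

lemma coprime_param_denominator: "coprime (t * t - D) (int p ^ k)"
proof (rule prime_imp_power_coprime[OF prime_int_p])
  show "\<not> int p dvd t * t - D"
    using dvd_pell_norm_imp_dvd[of "(t, 1)"] prime_int_p by (auto simp: pell_norm_def)
qed

lemma comm_group_H: "k \<ge> 1 \<Longrightarrow> comm_group (H k)"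
  by (rule comm_group_pell_group_residue_ring[OF p_power_gt_1])

lemma not_dvd_pell_param_fst_minus_one:
  assumes "k \<ge> 1"
  shows "\<not> int p dvd fst (pell_param D (int p ^ k) t) - 1"
proof
  let ?i = "modular_inverse (int p ^ k) (t * t - D)"
  assume "int p dvd fst (pell_param D (int p ^ k) t) - 1"
  moreover have "[fst (pell_param D (int p ^ k) t) - 1 = 2 * D * ?i] (mod int p)"
    using cong_p_if_cong_p_power[OF assms pell_param_fst_minus_one[OF coprime_param_denominator]] .
  ultimately have "int p dvd 2 * D * ?i"
    by (simp add: cong_dvd_iff)
  moreover have "\<not> int p dvd ?i"
    using coprime_modular_inverse[OF coprime_param_denominator] coprime_p_power_iff[OF assms] by blast
  ultimately show False
    using not_dvd_2 not_dvd_D prime_int_p by (simp add: prime_dvd_mult_iff)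
qed

lemma dvd_pell_param_fst_plus_one_iff:
  assumes "k \<ge> 1"
  shows "int p dvd fst (pell_param D (int p ^ k) t) + 1 \<longleftrightarrow> int p dvd t"
proof -
  let ?i = "modular_inverse (int p ^ k) (t * t - D)"
  have "[fst (pell_param D (int p ^ k) t) + 1 = 2 * t * t * ?i] (mod int p)"
    using cong_p_if_cong_p_power[OF assms pell_param_fst_plus_one[OF coprime_param_denominator]] .
  moreover have "\<not> int p dvd ?i"
    using coprime_modular_inverse[OF coprime_param_denominator] coprime_p_power_iff[OF assms] by blast
  ultimately show ?thesis
    using not_dvd_2 prime_int_p by (auto simp: cong_dvd_iff prime_dvd_mult_iff)
qed

lemma inj_on_pell_param:
  assumes "k \<ge> 1"
  shows "inj_on (pell_param D (int p ^ k)) {0..<int p ^ k}"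
proof (rule inj_onI)
  fix t1 t2 :: int
  assume t: "t1 \<in> {0..<int p ^ k}" "t2 \<in> {0..<int p ^ k}"
    and eq: "pell_param D (int p ^ k) t1 = pell_param D (int p ^ k) t2"
  define a where "a = pell_param D (int p ^ k) t1"
  have "[t1 * (fst a - 1) = t2 * (fst a - 1)] (mod int p ^ k)"
    using pell_param_line[OF coprime_param_denominator[where t = t1 and k = k]]
      pell_param_line[OF coprime_param_denominator[where t = t2 and k = k]]
    by (metis a_def eq cong_sym cong_trans)
  moreover have "coprime (fst a - 1) (int p ^ k)"
    using coprime_p_power_iff[OF assms] not_dvd_pell_param_fst_minus_one[OF assms]
    unfolding a_def by blast
  ultimately have "[t1 = t2] (mod int p ^ k)"
    by (simp add: cong_mult_rcancel)
  with t show "t1 = t2"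
    by (auto intro: cong_less_imp_eq_int)
qed

lemma image_pell_param:
  assumes "k \<ge> 1"
  shows "pell_param D (int p ^ k) ` {0..<int p ^ k}
    = {a \<in> carrier (H k). \<not> int p dvd fst a - 1}"
proof
  show "pell_param D (int p ^ k) ` {0..<int p ^ k} \<subseteq> {a \<in> carrier (H k). \<not> int p dvd fst a - 1}"
    using pell_param_in_carrier[OF coprime_param_denominator p_power_gt_1[OF assms]]
      not_dvd_pell_param_fst_minus_one[OF assms] by blast
  show "{a \<in> carrier (H k). \<not> int p dvd fst a - 1} \<subseteq> pell_param D (int p ^ k) ` {0..<int p ^ k}"
  proof safe
    fix a assume "a \<in> carrier (H k)" "\<not> int p dvd fst a - 1"
    then obtain t where "t \<in> {0..<int p ^ k}" "pell_param D (int p ^ k) t = a"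
      using pell_param_surj[OF p_power_gt_1[OF assms] coprime_2D] coprime_p_power_iff[OF assms]
      by metis
    then show "a \<in> pell_param D (int p ^ k) ` {0..<int p ^ k}"
      by blast
  qed
qed

lemma finite_carrier_H: "k \<ge> 1 \<Longrightarrow> finite (carrier (H k))"
  by (rule finite_subset[of _ "{0..<int p ^ k} \<times> {0..<int p ^ k}"])
    (auto simp: carrier_pell_group_residue_ring[OF p_power_gt_1])

lemma points_fst_plus_one_dvd_eq_image:
  assumes "k \<ge> 1"
  shows "{a \<in> carrier (H k). int p dvd fst a + 1}
    = pell_param D (int p ^ k) ` {t \<in> {0..<int p ^ k}. int p dvd t}"
proof (intro equalityI subsetI)
  fix a assume a: "a \<in> {a \<in> carrier (H k). int p dvd fst a + 1}"
  then have "\<not> int p dvd fst a - 1"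
    using not_dvd_plus_one_if_dvd_minus_one by blast
  with a obtain t where "t \<in> {0..<int p ^ k}" "a = pell_param D (int p ^ k) t"
    using image_pell_param[OF assms] by blast
  with a show "a \<in> pell_param D (int p ^ k) ` {t \<in> {0..<int p ^ k}. int p dvd t}"
    using dvd_pell_param_fst_plus_one_iff[OF assms] by auto
next
  fix a assume "a \<in> pell_param D (int p ^ k) ` {t \<in> {0..<int p ^ k}. int p dvd t}"
  then show "a \<in> {a \<in> carrier (H k). int p dvd fst a + 1}"
    using image_pell_param[OF assms] dvd_pell_param_fst_plus_one_iff[OF assms] by auto
qed

lemma bij_betw_negate_fst:
  assumes "k \<ge> 1"
  shows "bij_betw (\<lambda>a. ((- fst a) mod int p ^ k, snd a))
    {a \<in> carrier (H k). int p dvd fst a - 1} {a \<in> carrier (H k). int p dvd fst a + 1}"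
proof -
  let ?M = "int p ^ k"
  define neg where "neg = (\<lambda>a :: int \<times> int. ((- fst a) mod ?M, snd a))"
  have carrier: "carrier (H k) = {a. fst a \<in> {0..<?M} \<and> snd a \<in> {0..<?M} \<and> [pell_norm D a = 1] (mod ?M)}"
    using carrier_pell_group_residue_ring[OF p_power_gt_1[OF assms]] .
  have neg_carrier: "neg a \<in> carrier (H k)" if "a \<in> carrier (H k)" for a
    using negate_fst_in_carrier[OF p_power_gt_1[OF assms] that] by (simp add: neg_def)
  have neg_neg: "neg (neg a) = a" if "a \<in> carrier (H k)" for a
  proof -
    have "(- ((- fst a) mod ?M)) mod ?M = fst a mod ?M"
      by (simp add: mod_minus_eq)
    with that show ?thesis
      by (simp add: carrier neg_def prod_eq_iff)
  qed
  have neg_fst: "[fst (neg a) = - fst a] (mod int p)" for a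
    using cong_p_if_cong_p_power[OF assms] by (simp add: neg_def)
  have neg_dvd_plus: "int p dvd fst (neg a) + 1 \<longleftrightarrow> int p dvd fst a - 1" for a
  proof -
    have "[fst (neg a) + 1 = - (fst a - 1)] (mod int p)"
      using cong_add[OF neg_fst cong_refl[of 1]] by simp
    from cong_dvd_iff[OF this] show ?thesis by (simp only: dvd_minus_iff)
  qed
  have neg_dvd_minus: "int p dvd fst (neg a) - 1 \<longleftrightarrow> int p dvd fst a + 1" for a
  proof -
    have "[fst (neg a) - 1 = - (fst a + 1)] (mod int p)"
      using cong_diff[OF neg_fst cong_refl[of 1]] by simp
    from cong_dvd_iff[OF this] show ?thesis by (simp only: dvd_minus_iff)
  qed
  have "bij_betw neg {a \<in> carrier (H k). int p dvd fst a - 1} {a \<in> carrier (H k). int p dvd fst a + 1}"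
  proof (rule bij_betw_byWitness[where f' = neg])
    show "neg ` {a \<in> carrier (H k). int p dvd fst a - 1} \<subseteq> {a \<in> carrier (H k). int p dvd fst a + 1}"
      using neg_carrier neg_dvd_plus by auto
    show "neg ` {a \<in> carrier (H k). int p dvd fst a + 1} \<subseteq> {a \<in> carrier (H k). int p dvd fst a - 1}"
      using neg_carrier neg_dvd_minus by auto
  qed (simp_all add: neg_neg)
  then show ?thesis
    unfolding neg_def .
qed

lemma card_points_fst_minus_one_dvd:
  assumes "k \<ge> 1"
  shows "card {a \<in> carrier (H k). int p dvd fst a - 1} = p ^ (k - 1)"
proof -
  let ?M = "int p ^ k"
  have "card {a \<in> carrier (H k). int p dvd fst a - 1}
      = card (pell_param D ?M ` {t \<in> {0..<?M}. int p dvd t})"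
    using bij_betw_same_card[OF bij_betw_negate_fst[OF assms]] by (simp add: points_fst_plus_one_dvd_eq_image[OF assms])
  also have "\<dots> = card {t \<in> {0..<?M}. int p dvd t}"
    by (rule card_image, rule inj_on_subset[OF inj_on_pell_param[OF assms]]) auto
  also have "\<dots> = p ^ (k - 1)"
  proof -
    have "?M = int p * int p ^ (k - 1)"
      using assms by (simp flip: power_Suc)
    then show ?thesis
      using p_ge_3 card_multiples_int[of "int p" "int p ^ (k - 1)"] by (simp add: nat_power_eq)
  qed
  finally show ?thesis .
qed

lemma card_H:
  assumes "k \<ge> 1"
  shows "card (carrier (H k)) = p ^ (k - 1) * (p + 1)"
proof -
  let ?A = "pell_param D (int p ^ k) ` {0..<int p ^ k}"
  let ?B = "{a \<in> carrier (H k). int p dvd fst a - 1}"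
  have "carrier (H k) = ?A \<union> ?B"
    using image_pell_param[OF assms] by blast
  moreover have "card (?A \<union> ?B) = card ?A + card ?B"
    using finite_carrier_H[OF assms] image_pell_param[OF assms] by (intro card_Un_disjoint) auto
  moreover have "card ?A = p ^ k"
    using card_image[OF inj_on_pell_param[OF assms]] by (simp add: nat_power_eq)
  moreover have "p ^ k = p ^ (k - 1) * p"
    using assms by (simp flip: power_Suc2)
  ultimately show ?thesis
    using card_points_fst_minus_one_dvd[OF assms] by (simp add: algebra_simps)
qed

section \<open>An element of order \<open>p\<^bsup>r-1\<^esup>\<close>\<close>

lemma p_power_dvd_mult:
  assumes "int p ^ i dvd u" "int p ^ j dvd v" "k \<le> i + j"
  shows "int p ^ k dvd u * v"
proof -
  have "int p ^ (i + j) dvd u * v"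
    using mult_dvd_mono[OF assms(1,2)] by (simp add: power_add)
  then show ?thesis
    using assms(3) by (meson dvd_trans le_imp_power_dvd)
qed

text \<open>On the conic, \<open>x\<^sup>2 - 1 = D y\<^sup>2\<close>, and \<open>x + 1\<close> is a unit when \<open>x \<equiv> 1 (mod p)\<close>.\<close>
lemma p_power_dvd_fst_minus_one:
  assumes norm: "[pell_norm D g = 1] (mod int p ^ k)" and x: "int p dvd fst g - 1"
    and y: "int p ^ j dvd snd g" and "l \<le> k" "l \<le> 2 * j"
  shows "int p ^ l dvd fst g - 1"
proof -
  have "int p ^ l dvd pell_norm D g - 1"
    using norm \<open>l \<le> k\<close> by (meson cong_iff_dvd_diff dvd_trans le_imp_power_dvd)
  moreover have "int p ^ l dvd D * (snd g * snd g)"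
    using p_power_dvd_mult[OF y y] \<open>l \<le> 2 * j\<close> by simp
  ultimately have "int p ^ l dvd (fst g + 1) * (fst g - 1)"
    using dvd_add by (fastforce simp: pell_norm_def algebra_simps)
  moreover have "coprime (fst g + 1) (int p ^ l)"
    using not_dvd_plus_one_if_dvd_minus_one[OF x] prime_int_p by (rule prime_imp_power_coprime[rotated])
  ultimately show ?thesis
    using coprime_dvd_mult_right_iff coprime_commute by blast
qed

lemma pell_pow_snd_cong:
  assumes norm: "[pell_norm D g = 1] (mod int p ^ k)" and x: "int p dvd fst g - 1"
    and y: "int p ^ j dvd snd g" and "j \<ge> 1" "k \<le> 3 * j"
  shows "int p dvd fst (pell_pow D g n) - 1 \<and> int p ^ j dvd snd (pell_pow D g n)
    \<and> [snd (pell_pow D g n) = int n * snd g] (mod int p ^ k)"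
proof (induction n)
  case (Suc n)
  define h where "h = pell_pow D g n"
  have IH: "int p dvd fst h - 1" "int p ^ j dvd snd h" "[snd h = int n * snd g] (mod int p ^ k)"
    using Suc by (simp_all add: h_def)
  have norm_h: "[pell_norm D h = 1] (mod int p ^ k)"
    using cong_pow[OF norm, of n] by (simp add: h_def pell_norm_pow)
  have "int p dvd int p ^ j"
    using \<open>j \<ge> 1\<close> by (simp add: dvd_power)
  then have p_y: "int p dvd snd h" "int p dvd snd g"
    using IH(2) y by (meson dvd_trans)+
  \<comment> \<open>Both \<open>x\<close>-coordinates are \<open>\<equiv> 1\<close> modulo \<open>p\<^sup>l\<close>, and \<open>j + l \<ge> k\<close> makes the cross terms vanish.\<close>
  define l where "l = min (2 * j) k"
  have l: "k \<le> j + l" "l \<le> k" "l \<le> 2 * j"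
    using \<open>k \<le> 3 * j\<close> by (simp_all add: l_def)
  have x_g: "int p ^ l dvd fst g - 1" and x_h: "int p ^ l dvd fst h - 1"
    using p_power_dvd_fst_minus_one[OF norm x y l(2,3)]
      p_power_dvd_fst_minus_one[OF norm_h IH(1,2) l(2,3)] .
  have "fst (pell_pow D g (Suc n)) - 1 = fst h * (fst g - 1) + (fst h - 1) + snd h * (snd g * D)"
    by (simp add: h_def pell_mult_def algebra_simps)
  moreover have "int p dvd fst h * (fst g - 1) + (fst h - 1) + snd h * (snd g * D)"
    using x IH(1) p_y by (intro dvd_add dvd_mult dvd_mult2)
  ultimately have fst: "int p dvd fst (pell_pow D g (Suc n)) - 1"
    by (simp only:)
  have snd: "int p ^ j dvd snd (pell_pow D g (Suc n))"
    using IH(2) y by (simp add: h_def [symmetric] pell_mult_def)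
  have "snd (pell_pow D g (Suc n)) - int (Suc n) * snd g
      = (snd h - int n * snd g) + snd h * (fst g - 1) + (fst h - 1) * snd g"
    by (simp add: h_def pell_mult_def algebra_simps)
  moreover have "int p ^ k dvd (snd h - int n * snd g) + snd h * (fst g - 1) + (fst h - 1) * snd g"
    using IH(3) p_power_dvd_mult[OF IH(2) x_g l(1)] p_power_dvd_mult[OF x_h y] l(1)
    by (intro dvd_add) (simp_all add: cong_iff_dvd_diff add.commute)
  ultimately have "[snd (pell_pow D g (Suc n)) = int (Suc n) * snd g] (mod int p ^ k)"
    by (simp only: cong_iff_dvd_diff)
  with fst snd show ?case
    by blast
qed simp

lemma pell_pow_p_snd_dvd:
  assumes norm: "[pell_norm D g = 1] (mod int p ^ r)" and x: "int p dvd fst g - 1"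
    and y: "int p ^ j dvd snd g" and y_exact: "\<not> int p ^ (j + 1) dvd snd g"
    and "j \<ge> 1" "j + 1 \<le> r"
  shows "int p dvd fst (pell_pow D g p) - 1 \<and> int p ^ (j + 1) dvd snd (pell_pow D g p)
    \<and> (j + 2 \<le> r \<longrightarrow> \<not> int p ^ (j + 2) dvd snd (pell_pow D g p))"
proof -
  define k where "k = min (j + 2) r"
  have norm_k: "[pell_norm D g = 1] (mod int p ^ k)"
    using norm by (rule cong_dvd_modulus) (simp add: k_def le_imp_power_dvd)
  have "k \<le> 3 * j"
    using \<open>j \<ge> 1\<close> by (simp add: k_def)
  from pell_pow_snd_cong[OF norm_k x y \<open>j \<ge> 1\<close> this, where n = p]
  have pow: "int p dvd fst (pell_pow D g p) - 1"
    "int p ^ k dvd snd (pell_pow D g p) - int p * snd g"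
    by (simp_all add: cong_iff_dvd_diff)
  have py: "int p ^ (j + 1) dvd int p * snd g"
    using y by (simp add: mult_dvd_mono)
  have "j + 1 \<le> k"
    using \<open>j + 1 \<le> r\<close> by (simp add: k_def)
  then have "int p ^ (j + 1) dvd snd (pell_pow D g p) - int p * snd g"
    using pow(2) by (meson dvd_trans le_imp_power_dvd)
  from dvd_add[OF this py] have snd: "int p ^ (j + 1) dvd snd (pell_pow D g p)"
    by simp
  have "\<not> int p ^ (j + 2) dvd snd (pell_pow D g p)" if "j + 2 \<le> r"
  proof
    assume a: "int p ^ (j + 2) dvd snd (pell_pow D g p)"
    have "int p ^ (j + 2) dvd snd (pell_pow D g p) - int p * snd g"
      using pow(2) that by (simp add: k_def)
    from dvd_diff[OF a this] have "int p * int p ^ (j + 1) dvd int p * snd g"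
      by simp
    then show False
      using y_exact p_ge_3 by simp
  qed
  with pow(1) snd show ?thesis
    by blast
qed

lemma dvd_fst_mod_pair_minus_one_iff:
  "k \<ge> 1 \<Longrightarrow> int p dvd fst (mod_pair (int p ^ k) a) - 1 \<longleftrightarrow> int p dvd fst a - 1"
  using cong_p_if_cong_p_power[of k "fst a mod int p ^ k" "fst a"]
  by (intro cong_dvd_iff cong_diff) (simp_all add: mod_pair_def)

lemma p_power_dvd_snd_mod_pair_iff:
  "q \<le> k \<Longrightarrow> int p ^ q dvd snd (mod_pair (int p ^ k) a) \<longleftrightarrow> int p ^ q dvd snd a"
  by (simp add: mod_pair_def dvd_mod_iff le_imp_power_dvd)

text \<open>The second intersection of the conic with the line \<open>y = p (x + 1)\<close> through \<open>(-1, 0)\<close>;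
  it reduces to \<open>(1, 0)\<close> modulo \<open>p\<close>.\<close>
definition kernel_elem :: "nat \<Rightarrow> int \<times> int" where
  "kernel_elem k = mod_pair (int p ^ k)
     ((1 + D * (int p * int p)) * modular_inverse (int p ^ k) (1 - D * (int p * int p)),
      2 * int p * modular_inverse (int p ^ k) (1 - D * (int p * int p)))"

lemma coprime_kernel_elem_denominator: "coprime (1 - D * (int p * int p)) (int p ^ k)"
proof (rule prime_imp_power_coprime[OF prime_int_p])
  show "\<not> int p dvd 1 - D * (int p * int p)"
  proof
    assume "int p dvd 1 - D * (int p * int p)"
    then have "int p dvd 1 - D * (int p * int p) + D * (int p * int p)"
      by (intro dvd_add) simp_all
    then show False
      using p_ge_3 by simp
  qed
qed

lemma kernel_elem_in_carrier:
  assumes "k \<ge> 1"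
  shows "kernel_elem k \<in> carrier (H k)"
proof -
  let ?u = "1 - D * (int p * int p)"
  let ?i = "modular_inverse (int p ^ k) ?u"
  have "pell_norm D ((1 + D * (int p * int p)) * ?i, 2 * int p * ?i) = (?u * ?i) ^ 2"
    by (simp add: pell_norm_def power2_eq_square algebra_simps)
  also have "[(?u * ?i) ^ 2 = 1 ^ 2] (mod int p ^ k)"
    using coprime_kernel_elem_denominator by (intro cong_pow cong_modular_inverse1)
  finally show ?thesis
    unfolding kernel_elem_def using p_power_gt_1[OF assms] by (intro mod_pair_in_carrier) simp_all
qed

lemma kernel_elem_dvd:
  assumes "k \<ge> 1"
  shows "int p dvd fst (kernel_elem k) - 1" "int p dvd snd (kernel_elem k)"
    "k \<ge> 2 \<Longrightarrow> \<not> int p ^ 2 dvd snd (kernel_elem k)"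
proof -
  let ?u = "1 - D * (int p * int p)"
  let ?i = "modular_inverse (int p ^ k) ?u"
  have "[fst (kernel_elem k) - 1 = (1 + D * (int p * int p)) * ?i - ?u * ?i] (mod int p ^ k)"
    using cong_modular_inverse1[OF coprime_kernel_elem_denominator]
    by (intro cong_diff) (simp_all add: kernel_elem_def mod_pair_def cong_sym)
  moreover have "(1 + D * (int p * int p)) * ?i - ?u * ?i = int p * (2 * D * int p * ?i)"
    by (simp add: algebra_simps)
  ultimately have "[fst (kernel_elem k) - 1 = int p * (2 * D * int p * ?i)] (mod int p)"
    using cong_p_if_cong_p_power[OF assms] by simp
  from cong_dvd_iff[OF this] show "int p dvd fst (kernel_elem k) - 1"
    by simp
  have snd: "[snd (kernel_elem k) = int p * (2 * ?i)] (mod int p ^ k)"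
    by (simp add: kernel_elem_def mod_pair_def ac_simps)
  from cong_dvd_iff[OF cong_p_if_cong_p_power[OF assms this]] show "int p dvd snd (kernel_elem k)"
    by simp
  assume "k \<ge> 2"
  show "\<not> int p ^ 2 dvd snd (kernel_elem k)"
  proof
    assume "int p ^ 2 dvd snd (kernel_elem k)"
    moreover have "[snd (kernel_elem k) = int p * (2 * ?i)] (mod int p ^ 2)"
      using cong_dvd_modulus[OF snd le_imp_power_dvd[OF \<open>k \<ge> 2\<close>]] .
    ultimately have "int p * int p dvd int p * (2 * ?i)"
      by (simp add: cong_dvd_iff power2_eq_square)
    then have "int p dvd 2 * ?i"
      using p_ge_3 by simp
    moreover have "\<not> int p dvd ?i"
      using coprime_modular_inverse[OF coprime_kernel_elem_denominator] coprime_p_power_iff[OF assms]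
      by blast
    ultimately show False
      using not_dvd_2 prime_int_p by (simp add: prime_dvd_mult_iff)
  qed
qed

lemma pow_kernel_elem:
  assumes "i + 1 \<le> r"
  shows "int p dvd fst (kernel_elem r [^]\<^bsub>H r\<^esub> (p ^ i)) - 1
    \<and> int p ^ (i + 1) dvd snd (kernel_elem r [^]\<^bsub>H r\<^esub> (p ^ i))
    \<and> (i + 2 \<le> r \<longrightarrow> \<not> int p ^ (i + 2) dvd snd (kernel_elem r [^]\<^bsub>H r\<^esub> (p ^ i)))"
  using assms
proof (induction i)
  case 0
  then have "r \<ge> 1" by simp
  then interpret comm_group "H r" by (rule comm_group_H)
  show ?case
    using kernel_elem_dvd[OF \<open>r \<ge> 1\<close>] kernel_elem_in_carrier[OF \<open>r \<ge> 1\<close>]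
    by (simp add: power2_eq_square)
next
  case (Suc i)
  then have r: "r \<ge> 1" by simp
  then interpret comm_group "H r" by (rule comm_group_H)
  define g where "g = kernel_elem r [^]\<^bsub>H r\<^esub> (p ^ i)"
  have g: "g \<in> carrier (H r)"
    using kernel_elem_in_carrier[OF r] by (simp add: g_def)
  have IH: "int p dvd fst g - 1" "int p ^ Suc i dvd snd g" "\<not> int p ^ (Suc i + 1) dvd snd g"
    using Suc by (simp_all add: g_def)
  have "kernel_elem r [^]\<^bsub>H r\<^esub> (p ^ Suc i) = g [^]\<^bsub>H r\<^esub> p"
    using kernel_elem_in_carrier[OF r] by (simp add: g_def nat_pow_pow mult.commute)
  also have "\<dots> = mod_pair (int p ^ r) (pell_pow D g p)"
    using g p_power_gt_1[OF r] by (simp add: pow_pell_group_residue_ring)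
  finally have eq: "kernel_elem r [^]\<^bsub>H r\<^esub> (p ^ Suc i) = mod_pair (int p ^ r) (pell_pow D g p)" .
  have "[pell_norm D g = 1] (mod int p ^ r)"
    using g p_power_gt_1[OF r] by (simp add: carrier_pell_group_residue_ring)
  from pell_pow_p_snd_dvd[OF this IH] Suc.prems
  have "int p dvd fst (pell_pow D g p) - 1" "int p ^ (Suc i + 1) dvd snd (pell_pow D g p)"
    "Suc i + 2 \<le> r \<Longrightarrow> \<not> int p ^ (Suc i + 2) dvd snd (pell_pow D g p)"
    by simp_all
  then show ?case
    unfolding eq using Suc.prems dvd_fst_mod_pair_minus_one_iff[OF r]
      p_power_dvd_snd_mod_pair_iff[of "Suc i + 1" r] p_power_dvd_snd_mod_pair_iff[of "Suc i + 2" r]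
    by auto
qed

lemma pow_kernel_elem_eq_one:
  assumes r: "r \<ge> 1"
  shows "kernel_elem r [^]\<^bsub>H r\<^esub> (p ^ (r - 1)) = \<one>\<^bsub>H r\<^esub>"
proof -
  interpret comm_group "H r" by (rule comm_group_H[OF r])
  note c = kernel_elem_in_carrier[OF r]
  have carrier: "carrier (H r) = {a. fst a \<in> {0..<int p ^ r} \<and> snd a \<in> {0..<int p ^ r}
      \<and> [pell_norm D a = 1] (mod int p ^ r)}"
    using carrier_pell_group_residue_ring[OF p_power_gt_1[OF r]] .
  define g where "g = kernel_elem r [^]\<^bsub>H r\<^esub> (p ^ (r - 1))"
  have g: "g \<in> carrier (H r)"
    using c by (simp add: g_def)
  have x: "int p dvd fst g - 1" and y: "int p ^ r dvd snd g"
    using pow_kernel_elem[of "r - 1" r] r by (simp_all add: g_def)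
  have "snd g = 0"
  proof -
    have "snd g mod int p ^ r = 0"
      using y by simp
    then show ?thesis
      using g by (simp add: carrier)
  qed
  moreover have "fst g = 1"
  proof -
    have "int p ^ r dvd fst g - 1"
      using g x y by (intro p_power_dvd_fst_minus_one[where k = r and j = r]) (simp_all add: carrier)
    then have "fst g mod int p ^ r = 1 mod int p ^ r"
      by (simp add: mod_eq_dvd_iff)
    then show ?thesis
      using g p_power_gt_1[OF r] by (simp add: carrier)
  qed
  ultimately have "g = \<one>\<^bsub>H r\<^esub>"
    by (simp add: one_pell_group_residue_ring prod_eq_iff)
  then show ?thesis
    by (simp add: g_def)
qed

lemma ord_kernel_elem:
  assumes r: "r \<ge> 1"
  shows "group.ord (H r) (kernel_elem r) = p ^ (r - 1)"
proof -
  interpret comm_group "H r" by (rule comm_group_H[OF r])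
  note c = kernel_elem_in_carrier[OF r]
  then obtain e where e: "e \<le> r - 1" "ord (kernel_elem r) = p ^ e"
    using pow_kernel_elem_eq_one[OF r] pow_eq_id[OF c] divides_primepow_nat[OF prime_p] by auto
  have "e = r - 1"
  proof (rule ccontr)
    assume "e \<noteq> r - 1"
    then have "ord (kernel_elem r) dvd p ^ (r - 2)"
      using e by (simp add: le_imp_power_dvd)
    then have "kernel_elem r [^]\<^bsub>H r\<^esub> (p ^ (r - 2)) = \<one>\<^bsub>H r\<^esub>"
      using pow_eq_id[OF c] by blast
    moreover have "\<not> int p ^ r dvd snd (kernel_elem r [^]\<^bsub>H r\<^esub> (p ^ (r - 2)))"
    proof -
      have r2: "r - 2 + 1 \<le> r" "r - 2 + 2 = r"
        using e \<open>e \<noteq> r - 1\<close> by auto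
      with pow_kernel_elem[OF r2(1)] show ?thesis
        by (simp only:) blast
    qed
    ultimately show False
      by (simp add: one_pell_group_residue_ring)
  qed
  with e show ?thesis
    by simp
qed

section \<open>An element of order divisible by \<open>p + 1\<close>\<close>

text \<open>The field \<open>\<int>\<^sub>p[\<surd>D]\<close>, realised on pairs of residues with the multiplication of \<open>H 1\<close>.\<close>
definition pell_field :: "(int \<times> int) ring" where
  "pell_field =
    \<lparr>carrier = {0..<int p} \<times> {0..<int p}, mult = (\<lambda>a b. mod_pair (int p) (pell_mult D a b)),
     one = (1, 0), zero = (0, 0), add = (\<lambda>a b. mod_pair (int p) (fst a + fst b, snd a + snd b))\<rparr>"

lemma pell_field_simps:
  "carrier pell_field = {0..<int p} \<times> {0..<int p}"
  "a \<otimes>\<^bsub>pell_field\<^esub> b = mod_pair (int p) (pell_mult D a b)"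
  "\<one>\<^bsub>pell_field\<^esub> = (1, 0)" "\<zero>\<^bsub>pell_field\<^esub> = (0, 0)"
  "a \<oplus>\<^bsub>pell_field\<^esub> b = mod_pair (int p) (fst a + fst b, snd a + snd b)"
  by (simp_all add: pell_field_def)

lemma cring_pell_field: "cring pell_field"
proof (rule cringI)
  have p: "int p > 0"
    using p_ge_3 by simp
  show "abelian_group pell_field"
  proof (rule abelian_groupI)
    fix a assume "a \<in> carrier pell_field"
    then show "\<zero>\<^bsub>pell_field\<^esub> \<oplus>\<^bsub>pell_field\<^esub> a = a"
      by (auto simp: pell_field_simps mod_pair_def)
    show "\<exists>b \<in> carrier pell_field. b \<oplus>\<^bsub>pell_field\<^esub> a = \<zero>\<^bsub>pell_field\<^esub>"
    proof (rule bexI)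
      show "((- fst a) mod int p, (- snd a) mod int p) \<oplus>\<^bsub>pell_field\<^esub> a = \<zero>\<^bsub>pell_field\<^esub>"
        by (simp add: pell_field_simps mod_pair_def mod_add_left_eq)
    qed (use p in \<open>simp add: pell_field_simps\<close>)
  qed (use p in \<open>auto simp: pell_field_simps mod_pair_def mod_simps ac_simps\<close>)
  show "comm_monoid pell_field"
  proof (rule comm_monoidI)
    fix a b c
    show "a \<otimes>\<^bsub>pell_field\<^esub> b \<otimes>\<^bsub>pell_field\<^esub> c = a \<otimes>\<^bsub>pell_field\<^esub> (b \<otimes>\<^bsub>pell_field\<^esub> c)"
      by (simp add: pell_field_simps mod_pair_mult_left mod_pair_mult_right pell_mult_assoc)
    show "a \<otimes>\<^bsub>pell_field\<^esub> b = b \<otimes>\<^bsub>pell_field\<^esub> a"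
      by (simp add: pell_field_simps pell_mult_commute)
  qed (use p_ge_3 in \<open>auto simp: pell_field_simps mod_pair_def\<close>)
  fix a b c
  have "mod_pair (int p) (pell_mult D (mod_pair (int p) (fst a + fst b, snd a + snd b)) c)
      = mod_pair (int p) (fst (pell_mult D a c) + fst (pell_mult D b c),
          snd (pell_mult D a c) + snd (pell_mult D b c))"
    by (simp add: mod_pair_mult_left) (simp add: pell_mult_def algebra_simps)
  then show "(a \<oplus>\<^bsub>pell_field\<^esub> b) \<otimes>\<^bsub>pell_field\<^esub> c
      = a \<otimes>\<^bsub>pell_field\<^esub> c \<oplus>\<^bsub>pell_field\<^esub> b \<otimes>\<^bsub>pell_field\<^esub> c"
    by (simp add: pell_field_simps mod_pair_def mod_simps)
qed

lemma not_dvd_pell_norm_if_nonzero: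
  assumes "a \<in> carrier pell_field" "a \<noteq> (0, 0)"
  shows "\<not> int p dvd pell_norm D a"
proof
  assume "int p dvd pell_norm D a"
  then have "int p dvd fst a" "int p dvd snd a"
    using dvd_pell_norm_imp_dvd by simp_all
  then show False
    using assms by (auto simp: pell_field_simps prod_eq_iff dest: zdvd_imp_le)
qed

lemma field_pell_field: "field pell_field"
proof (rule cring.cring_fieldI2[OF cring_pell_field])
  show "\<zero>\<^bsub>pell_field\<^esub> \<noteq> \<one>\<^bsub>pell_field\<^esub>"
    by (simp add: pell_field_simps)
next
  fix a assume a: "a \<in> carrier pell_field" "a \<noteq> \<zero>\<^bsub>pell_field\<^esub>"
  have "\<not> int p dvd pell_norm D a"
    using a not_dvd_pell_norm_if_nonzero by (simp add: pell_field_simps)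
  then have "coprime (pell_norm D a) (int p)"
    using prime_int_p prime_imp_coprime coprime_commute by blast
  then have inv: "[pell_norm D a * modular_inverse (int p) (pell_norm D a) = 1] (mod int p)"
    by (rule cong_modular_inverse1)
  define b where "b = mod_pair (int p) (fst a * modular_inverse (int p) (pell_norm D a),
    - snd a * modular_inverse (int p) (pell_norm D a))"
  have "pell_mult D a (fst a * modular_inverse (int p) (pell_norm D a),
      - snd a * modular_inverse (int p) (pell_norm D a))
    = (pell_norm D a * modular_inverse (int p) (pell_norm D a), 0)"
    by (simp add: pell_mult_def pell_norm_def algebra_simps)
  then have "a \<otimes>\<^bsub>pell_field\<^esub> b = \<one>\<^bsub>pell_field\<^esub>"
    using inv p_ge_3 by (simp add: pell_field_simps b_def mod_pair_mult_right)
      (simp add: mod_pair_def cong_def)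
  moreover have "b \<in> carrier pell_field"
    using p_ge_3 by (simp add: b_def mod_pair_def pell_field_simps)
  ultimately show "\<exists>b \<in> carrier pell_field. a \<otimes>\<^bsub>pell_field\<^esub> b = \<one>\<^bsub>pell_field\<^esub>"
    by blast
qed

lemma pow_pell_field:
  "a \<in> carrier pell_field \<Longrightarrow> a [^]\<^bsub>pell_field\<^esub> n = mod_pair (int p) (pell_pow D a n)"
proof (induction n)
  case 0
  then show ?case
    using p_ge_3 by (simp add: pell_field_simps mod_pair_def)
next
  case (Suc n)
  then show ?case
    by (simp add: pell_field_simps mod_pair_mult_left)
qed

lemma pow_p_minus_one_in_H1:
  assumes "g \<in> carrier pell_field" "g \<noteq> (0, 0)"
  shows "g [^]\<^bsub>pell_field\<^esub> (p - 1) \<in> carrier (H 1)"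
proof -
  have "[pell_norm D (pell_pow D g (p - 1)) = 1] (mod int p)"
    using fermat_theorem_int[OF prime_p not_dvd_pell_norm_if_nonzero[OF assms]]
    by (simp add: pell_norm_pow)
  then show ?thesis
    using mod_pair_in_carrier[of "int p ^ 1" D "pell_pow D g (p - 1)"] p_ge_3 pow_pell_field[OF assms(1)]
    by simp
qed

lemma ord_H1_eq_ord_mult_of:
  assumes z: "z \<in> carrier (H 1)" and z': "z \<in> carrier (mult_of pell_field)"
  shows "group.ord (H 1) z = group.ord (mult_of pell_field) z"
proof -
  interpret F: field pell_field
    by (rule field_pell_field)
  interpret M: group "mult_of pell_field"
    by (rule F.field_mult_group)
  interpret H1: comm_group "H 1"
    by (rule comm_group_H) simp
  have "z [^]\<^bsub>H 1\<^esub> n = z [^]\<^bsub>mult_of pell_field\<^esub> n" for n :: nat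
    using pow_pell_group_residue_ring[of "int p ^ 1" z D n] z z' p_ge_3 pow_pell_field[of z n]
    by (simp add: nat_pow_mult_of)
  then show ?thesis
    using H1.ord_unique[OF z] M.pow_eq_id[OF z']
    by (simp add: one_pell_group_residue_ring pell_field_simps)
qed

lemma exists_ord_p_plus_one: "\<exists>z \<in> carrier (H 1). group.ord (H 1) z = p + 1"
proof -
  interpret F: field pell_field
    by (rule field_pell_field)
  interpret M: group "mult_of pell_field"
    by (rule F.field_mult_group)
  have fin: "finite (carrier pell_field)"
    by (simp add: pell_field_simps)
  have "card (carrier pell_field) = p * p"
    by (simp add: pell_field_simps card_cartesian_product)
  then have "order (mult_of pell_field) = (p - 1) * (p + 1)"
    using F.order_mult_of[OF fin] p_ge_3 by (simp add: order_def algebra_simps)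
  then obtain g where g: "g \<in> carrier (mult_of pell_field)" and ord_g: "M.ord g = (p - 1) * (p + 1)"
    using F.exists_ord_eq_order_mult_of[OF fin] by auto
  define z where "z = g [^]\<^bsub>pell_field\<^esub> (p - 1)"
  have "M.ord (g [^]\<^bsub>mult_of pell_field\<^esub> (p - 1)) = M.ord g div (p - 1)"
  proof (rule M.ord_pow[OF g])
    show "p - 1 dvd M.ord g"
      by (simp only: ord_g dvd_triv_left)
  qed (use p_ge_3 in simp)
  also have "M.ord g div (p - 1) = p + 1"
    using p_ge_3 unfolding ord_g by (intro nonzero_mult_div_cancel_left) simp
  finally have ord_z: "M.ord z = p + 1"
    by (simp add: z_def nat_pow_mult_of)
  have z_H: "z \<in> carrier (H 1)"
    using g pow_p_minus_one_in_H1[of g] by (simp add: z_def pell_field_simps)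
  have "z \<in> carrier (mult_of pell_field)"
    using M.nat_pow_closed[OF g] by (simp add: z_def nat_pow_mult_of)
  with z_H ord_z show ?thesis
    using ord_H1_eq_ord_mult_of by (intro bexI[of _ z]) simp_all
qed

lemma eq_one_if_dvd_fst_minus_one:
  assumes a: "a \<in> carrier (H 1)" and "int p dvd fst a - 1"
  shows "a = \<one>\<^bsub>H 1\<^esub>"
proof -
  interpret comm_group "H 1"
    by (rule comm_group_H) simp
  have "int p dvd fst \<one>\<^bsub>H 1\<^esub> - 1"
    by (simp add: one_pell_group_residue_ring)
  moreover have "card {a \<in> carrier (H 1). int p dvd fst a - 1} = 1"
    using card_points_fst_minus_one_dvd[of 1] by simp
  then obtain e where "{a \<in> carrier (H 1). int p dvd fst a - 1} = {e}"
    by (rule card_1_singletonE)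
  ultimately show ?thesis
    using assms one_closed by (metis (no_types, lifting) mem_Collect_eq singletonD)
qed

lemma exists_ord_multiple_p_plus_one:
  assumes r: "r \<ge> 1"
  shows "\<exists>b \<in> carrier (H r). p + 1 dvd group.ord (H r) b"
proof -
  obtain z where z: "z \<in> carrier (H 1)" and ord_z: "group.ord (H 1) z = p + 1"
    using exists_ord_p_plus_one by blast
  interpret H1: comm_group "H 1"
    by (rule comm_group_H) simp
  have "\<not> int p dvd fst z - 1"
  proof
    assume "int p dvd fst z - 1"
    with z have "group.ord (H 1) z = 1"
      using eq_one_if_dvd_fst_minus_one H1.ord_id by metis
    with ord_z p_ge_3 show False
      by simp
  qed
  with z have "z \<in> pell_param D (int p ^ 1) ` {0..<int p ^ 1}"
    unfolding image_pell_param[OF order.refl] by blast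
  then obtain t where t: "t \<in> {0..<int p ^ 1}" "pell_param D (int p ^ 1) t = z"
    by (elim imageE) simp
  define b where "b = pell_param D (int p ^ r) t"
  have b: "b \<in> carrier (H r)"
    unfolding b_def by (rule pell_param_in_carrier[OF coprime_param_denominator p_power_gt_1[OF r]])
  have reduce: "mod_pair (int p ^ 1) b = z"
    using mod_pair_pell_param[OF _ coprime_param_denominator] r t(2)
    by (simp add: b_def le_imp_power_dvd)
  interpret Hr: comm_group "H r"
    by (rule comm_group_H[OF r])
  have "z [^]\<^bsub>H 1\<^esub> Hr.ord b = mod_pair (int p ^ 1) (b [^]\<^bsub>H r\<^esub> Hr.ord b)"
    using mod_pair_pow_pell_group[OF _ _ p_power_gt_1[OF r] b, of "int p ^ 1"] r p_ge_3 reduce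
    by (simp add: le_imp_power_dvd)
  also have "\<dots> = \<one>\<^bsub>H 1\<^esub>"
    using b p_ge_3 by (simp add: one_pell_group_residue_ring mod_pair_def)
  finally have "H1.ord z dvd Hr.ord b"
    using H1.pow_eq_id[OF z] by simp
  with b ord_z show ?thesis
    by auto
qed

lemma cyclic_H:
  assumes r: "r \<ge> 1"
  shows "cyclic_group (H r)"
proof -
  interpret comm_group "H r"
    by (rule comm_group_H[OF r])
  have fin: "finite (carrier (H r))"
    by (rule finite_carrier_H[OF r])
  obtain b where "b \<in> carrier (H r)" "p + 1 dvd ord b"
    using exists_ord_multiple_p_plus_one[OF r] by blast
  then obtain b' where b': "b' \<in> carrier (H r)" and ord_b': "ord b' = p + 1"
    using exists_ord_eq_if_dvd_ord[OF fin] by blast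
  define c where "c = kernel_elem r"
  have c: "c \<in> carrier (H r)" "ord c = p ^ (r - 1)"
    using kernel_elem_in_carrier[OF r] ord_kernel_elem[OF r] by (simp_all add: c_def)
  have "coprime (ord c) (ord b')"
    unfolding c(2) ord_b' by simp
  then have "ord (c \<otimes>\<^bsub>H r\<^esub> b') = p ^ (r - 1) * (p + 1)"
    using ord_mult_coprime[OF c(1) b'] c(2) ord_b' by simp
  also have "\<dots> = card (carrier (H r))"
    using card_H[OF r] by simp
  finally show ?thesis
    using fin b' c(1) by (intro cyclic_group_if_ord_eq_card) simp_all
qed

end

theorem theorem1:
  fixes p r :: nat and D :: int
  assumes "prime p" and "r \<ge> 1"
    and "D \<in> Units (residue_ring (int (p ^ r)))"
    and "\<not> QuadRes (int p) D"
  shows "group (pell_group (residue_ring (int (p ^ r))) D)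
       \<and> cyclic_group (pell_group (residue_ring (int (p ^ r))) D)
       \<and> card (carrier (pell_group (residue_ring (int (p ^ r))) D)) = p ^ (r - 1) * (p + 1)"
proof -
  interpret pell_nonresidue p D
    using assms(1,4) by unfold_locales
  have "group (H r)"
    using comm_group_H[OF assms(2)] by (rule comm_group.axioms(2))
  then show ?thesis
    using cyclic_H[OF assms(2)] card_H[OF assms(2)] by simp
qed

end
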